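(* Assume $\sigma_1$ consists of simple eigenvalues and let $N\ge N_1$ be such that $\lambda_m^k\ne0$ for $|k|\ge N$. For $1\le m\le\ell_1$, $|k|\ge N$ let $\varphi_m^k=((I-e^{-\lambda_m^k}A_{-1})x_m^k,e^{\lambda_m^k\theta}x_m^k)$ and $\psi_m^k=\big(y_m^k,[\overline{\lambda_m^k}e^{-\overline{\lambda_m^k}\theta}-A_2^*(\theta)+e^{-\overline{\lambda_m^k}\theta}\int_0^\theta e^{\overline{\lambda_m^k}s}(A_3^*(s)+\overline{\lambda_m^k}A_2^*(s))ds]y_m^k\big)$, with $x_m^k\in\ker\Delta(\lambda_m^k)$, $y_m^k\in\ker\Delta^*(\overline{\lambda_m^k})$, $\|x_m^k\|=\|y_m^k\|=1$. Then there is a constant $C>0$ such that $\|\varphi_m^k\|_{M_2}\le C$ and $\frac{1}{|\lambda_m^k|}\|\psi_m^k\|_{M_2}\le C$ for all $1\le m\le\ell_1$, $|k|\ge N$.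
   Context: Setting: $n\ge1$, $A_{-1}\in\mathbb C^{n\times n}$, $A_2,A_3\in L_2([-1,0];\mathbb C^{n\times n})$; $M_2=\mathbb C^n\times L_2(-1,0;\mathbb C^n)$ with the product inner product. $\Delta(\lambda)=-\lambda I+\lambda e^{-\lambda}A_{-1}+\lambda\int_{-1}^0e^{\lambda s}A_2(s)ds+\int_{-1}^0e^{\lambda s}A_3(s)ds$, $\Delta^*(\lambda)$ the same with conjugate transposes. Spectral notation: $\mu_1,\dots,\mu_\ell$ distinct eigenvalues of $A_{-1}$ (possibly $\det A_{-1}=0$), $\sigma_1=\sigma(A_{-1})\cap\{|\mu|=1\}=\{\mu_1,\dots,\mu_{\ell_1}\}$; "$\sigma_1$ consists of simple eigenvalues" means each $\mu_m$, $m\le\ell_1$, has algebraic multiplicity $1$. $\tilde\lambda_m^k=\mathrm i(\arg\mu_m+2\pi k)$. Known: there are $N_1$ and radii $r^{(k)}$ with $\sum_k(r^{(k)})^2<\infty$ such that for $m\le\ell_1$, $|k|\ge N_1$ the disc of radius $r^{(k)}$ about $\tilde\lambda_m^k$ contains exactly one root (with multiplicity) $\lambda_m^k$ of $\det\Delta$, a simple eigenvalue of the associated operator, with $|\lambda_m^k-\tilde\lambda_m^k|\to0$. *)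

theory Defs
  imports "HOL-Analysis.Analysis" "HOL-Computational_Algebra.Polynomial"
begin

text \<open>Complex n x n matrices are rendered as complex^'n^'n (n = CARD('n) \<ge> 1).\<close>

definition smat :: "complex \<Rightarrow> complex^'n^'m \<Rightarrow> complex^'n^'m" where
  "smat c A = (\<chi> i j. c * A $ i $ j)"

definition adjm :: "complex^'n^'m \<Rightarrow> complex^'m^'n" where
  "adjm A = (\<chi> i j. cnj (A $ j $ i))"

definition charpoly :: "complex^'n^'n \<Rightarrow> complex poly" where
  "charpoly A = det (\<chi> i j. (if i = j then [:0, 1:] else 0) - [:A $ i $ j:])"

definition eigenvalues :: "complex^'n^'n \<Rightarrow> complex set" where
  "eigenvalues A = {\<mu>. \<exists>v. v \<noteq> 0 \<and> A *v v = \<mu> *s v}"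

definition alg_mult :: "complex^'n^'n \<Rightarrow> complex \<Rightarrow> nat" where
  "alg_mult A \<mu> = order \<mu> (charpoly A)"

definition sigma1 :: "complex^'n^'n \<Rightarrow> complex set" where
  "sigma1 A = {\<mu> \<in> eigenvalues A. cmod \<mu> = 1}"

definition L2_on :: "(real \<Rightarrow> 'a::euclidean_space) \<Rightarrow> bool" where
  "L2_on f \<longleftrightarrow> set_borel_measurable lborel {-1..0} f \<and>
                 set_integrable lborel {-1..0} (\<lambda>\<theta>. norm (f \<theta>) ^ 2)"

text \<open>Norm in M_2 = C^n x L_2(-1,0;C^n).\<close>
definition M2_norm :: "complex^'n \<Rightarrow> (real \<Rightarrow> complex^'n) \<Rightarrow> real" where
  "M2_norm v f = sqrt (norm v ^ 2 + (LINT \<theta>:{-1..0}|lborel. norm (f \<theta>) ^ 2))"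

definition Delta :: "complex^'n^'n \<Rightarrow> (real \<Rightarrow> complex^'n^'n) \<Rightarrow> (real \<Rightarrow> complex^'n^'n)
                      \<Rightarrow> complex \<Rightarrow> complex^'n^'n" where
  "Delta A1 A2 A3 l =
     smat (- l) (mat 1) + smat (l * exp (- l)) A1
     + smat l (LINT s:{-1..0}|lborel. smat (exp (l * of_real s)) (A2 s))
     + (LINT s:{-1..0}|lborel. smat (exp (l * of_real s)) (A3 s))"

definition Delta_star :: "complex^'n^'n \<Rightarrow> (real \<Rightarrow> complex^'n^'n) \<Rightarrow> (real \<Rightarrow> complex^'n^'n)
                      \<Rightarrow> complex \<Rightarrow> complex^'n^'n" where
  "Delta_star A1 A2 A3 l = Delta (adjm A1) (\<lambda>s. adjm (A2 s)) (\<lambda>s. adjm (A3 s)) l"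

definition lam_tilde :: "complex \<Rightarrow> int \<Rightarrow> complex" where
  "lam_tilde \<mu> k = \<i> * of_real (Arg \<mu> + 2 * pi * of_int k)"

definition phi0 :: "complex^'n^'n \<Rightarrow> complex \<Rightarrow> complex^'n \<Rightarrow> complex^'n" where
  "phi0 A1 l x = (mat 1 - smat (exp (- l)) A1) *v x"

definition phi1 :: "complex \<Rightarrow> complex^'n \<Rightarrow> real \<Rightarrow> complex^'n" where
  "phi1 l x \<theta> = exp (l * of_real \<theta>) *s x"

definition psi1 :: "(real \<Rightarrow> complex^'n^'n) \<Rightarrow> (real \<Rightarrow> complex^'n^'n)
                    \<Rightarrow> complex \<Rightarrow> complex^'n \<Rightarrow> real \<Rightarrow> complex^'n" where
  "psi1 A2 A3 l y \<theta> =
     (smat (cnj l * exp (- cnj l * of_real \<theta>)) (mat 1) - adjm (A2 \<theta>)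
      + smat (exp (- cnj l * of_real \<theta>))
          (interval_lebesgue_integral lborel (ereal 0) (ereal \<theta>)
             (\<lambda>s. smat (exp (cnj l * of_real s)) (adjm (A3 s) + smat (cnj l) (adjm (A2 s))))))
     *v y"

end

theory Submission
  imports Defs
begin

text \<open>
  The argument is elementary once three facts are isolated.
  (1) The eigenvalues of A_{-1} are the roots of its characteristic polynomial, which is nonzero;
      hence sigma_1 is finite.
  (2) For |Re l| <= R both phi and psi are estimated pointwise on [-1,0] via |exp(l t)| <= exp R
      and the Frobenius-norm inequality |B v| <= |B| |v|; this gives |phi|_{M_2} <= const and
      |psi|_{M_2} <= P + Q |l| with P, Q depending only on R, A_2, A_3.
  (3) Since lambda_m^k lies within r^{(k)} of the purely imaginary tilde-lambda_m^k and the r^{(k)}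
      are square-summable (so bounded by some rho), we get |Re lambda_m^k| <= rho and
      |lambda_m^k| >= 1 for large |k|; together with finiteness of sigma_1 and lambda_m^k /= 0
      this yields a uniform lower bound delta > 0 on |lambda_m^k|.
  The theorem follows with C = max(bound for phi, P/delta + Q).
\<close>

section \<open>Frobenius norm of complex matrices\<close>

text \<open>The norm on complex^'n^'m is the Frobenius norm; we need its behaviour under scaling,
  conjugate transposition, and that it dominates the operator norm.\<close>

lemma norm_vec_sq: "norm (v::'a::real_normed_vector^'n)^2 = (\<Sum>i\<in>UNIV. norm (v$i)^2)"
  unfolding norm_vec_def L2_set_def by (simp add: sum_nonneg)

lemma norm_cvec_scale: "norm (c *s (v::complex^'n)) = cmod c * norm v"
proof -
  have "norm (c *s v)^2 = (cmod c * norm v)^2"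
    by (simp add: norm_vec_sq power_mult_distrib norm_mult sum_distrib_left)
  then show ?thesis by (simp add: power2_eq_iff_nonneg)
qed

lemma norm_smat: "norm (smat c (M::complex^'n^'m)) = cmod c * norm M"
proof -
  have "smat c M = (\<chi> i. c *s (M $ i))" by (simp add: smat_def vec_eq_iff)
  then have "norm (smat c M)^2 = (cmod c * norm M)^2"
    by (simp add: norm_vec_sq[of "\<chi> i. c *s (M $ i)"] norm_vec_sq[of M] norm_cvec_scale
          power_mult_distrib sum_distrib_left)
  then show ?thesis by (simp add: power2_eq_iff_nonneg)
qed

lemma norm_adjm: "norm (adjm (M::complex^'n^'m)) = norm M"
proof -
  have "norm (adjm M)^2 = norm M^2"
    unfolding norm_vec_sq[of "adjm M"] norm_vec_sq[of M]
    by (simp add: adjm_def norm_vec_sq) (rule sum.swap)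
  then show ?thesis by (simp add: power2_eq_iff_nonneg)
qed

lemma smat_mult_vector: "smat c M *v v = c *s (M *v (v::complex^'n))"
  by (simp add: smat_def matrix_vector_mult_def vec_eq_iff sum_distrib_left mult.assoc)

lemma norm_row_mult_le:
  "cmod (\<Sum>j\<in>UNIV. (u::complex^'n) $ j * v $ j) \<le> norm u * norm v"
proof -
  have "cmod (\<Sum>j\<in>UNIV. u $ j * v $ j) \<le> (\<Sum>j\<in>UNIV. \<bar>cmod (u $ j)\<bar> * \<bar>cmod (v $ j)\<bar>)"
    by (rule order_trans[OF norm_sum]) (simp add: norm_mult)
  also have "\<dots> \<le> L2_set (\<lambda>j. cmod (u $ j)) UNIV * L2_set (\<lambda>j. cmod (v $ j)) UNIV"
    by (rule L2_set_mult_ineq)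
  finally show ?thesis by (simp add: norm_vec_def)
qed

lemma norm_matrix_vector_le: "norm (B *v x) \<le> norm B * norm (x::complex^'n)"
proof -
  have "norm (B *v x)^2 = (\<Sum>i\<in>UNIV. cmod (\<Sum>j\<in>UNIV. B $ i $ j * x $ j)^2)"
    by (simp add: norm_vec_sq matrix_vector_mult_def)
  also have "\<dots> \<le> (\<Sum>i\<in>UNIV. (norm (B $ i) * norm x)^2)"
    by (intro sum_mono power_mono norm_row_mult_le) simp
  also have "\<dots> = (norm B * norm x)^2"
    by (simp add: norm_vec_sq[of B] power_mult_distrib sum_distrib_right)
  finally show ?thesis by (simp add: power2_le_iff_abs_le)
qed

section \<open>Finiteness of the spectrum\<close>

lemma det_eq_0_iff_kernel:
  "det (M::'a::field^'n^'n) = 0 \<longleftrightarrow> (\<exists>v. v \<noteq> 0 \<and> M *v v = 0)"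
  using invertible_det_nz[of M] matrix_left_invertible_ker[of M]
  by (auto simp: invertible_left_inverse)

lemma poly_charpoly:
  "poly (charpoly A) z = det ((\<chi> i j. (if i = j then z else 0) - A $ i $ j) :: complex^'n^'n)"
  unfolding charpoly_def det_def by (auto simp add: poly_sum poly_prod intro!: sum.cong prod.cong)

lemma shifted_matrix_mult:
  "((\<chi> i j. (if i = j then z else 0) - A $ i $ j) :: complex^'n^'n) *v v = z *s v - A *v v"
proof -
  have "((\<chi> i j. (if i = j then z else 0) - A $ i $ j) :: complex^'n^'n) = smat z (mat 1) - A"
    by (simp add: vec_eq_iff smat_def mat_def)
  then show ?thesis by (simp add: matrix_vector_mult_diff_rdistrib smat_mult_vector)
qed

lemma eigenvalues_eq_roots: "eigenvalues (A::complex^'n^'n) = {z. poly (charpoly A) z = 0}"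
proof -
  have eig: "A *v v = z *s v \<longleftrightarrow> (\<chi> i j. (if i = j then z else 0) - A $ i $ j) *v v = 0" for z v
    unfolding shifted_matrix_mult by (metis right_minus_eq)
  show ?thesis
    unfolding eigenvalues_def poly_charpoly det_eq_0_iff_kernel eig ..
qed

text \<open>The characteristic polynomial is nonzero: |A| + 1 exceeds every eigenvalue in modulus.\<close>

lemma charpoly_nonzero: "charpoly (A::complex^'n^'n) \<noteq> 0"
proof
  assume "charpoly A = 0"
  then have "complex_of_real (norm A + 1) \<in> eigenvalues A"
    unfolding eigenvalues_eq_roots by simp
  then obtain v where "v \<noteq> 0" and eig: "A *v v = complex_of_real (norm A + 1) *s v"
    unfolding eigenvalues_def by blast
  have "(norm A + 1) * norm v = norm (A *v v)"
    unfolding eig norm_cvec_scale by (simp del: of_real_add)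
  also have "\<dots> \<le> norm A * norm v" by (rule norm_matrix_vector_le)
  finally show False using \<open>v \<noteq> 0\<close> by (simp add: algebra_simps)
qed

lemma finite_eigenvalues: "finite (eigenvalues (A::complex^'n^'n))"
  unfolding eigenvalues_eq_roots by (rule poly_roots_finite[OF charpoly_nonzero])

section \<open>Estimates in M_2\<close>

lemma cmod_exp_le:
  assumes "\<bar>Re l\<bar> \<le> R" and "\<bar>\<theta>\<bar> \<le> 1"
  shows "cmod (exp (l * of_real \<theta>)) \<le> exp R"
proof -
  have "\<bar>Re l\<bar> * \<bar>\<theta>\<bar> \<le> R * 1"
    using assms by (intro mult_mono) auto
  then have "Re l * \<theta> \<le> R"
    using abs_ge_self[of "Re l * \<theta>"] by (simp add: abs_mult)
  then show ?thesis by simp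
qed

lemma L2_on_by_bound:
  fixes f :: "real \<Rightarrow> 'a::euclidean_space"
  assumes meas: "set_borel_measurable lborel {-1..0} f"
    and g: "set_integrable lborel {-1..0} g"
    and bound: "\<And>\<theta>. \<theta> \<in> {-1..0} \<Longrightarrow> norm (f \<theta>)^2 \<le> g \<theta>"
  shows "L2_on f \<and> (LINT \<theta>:{-1..0}|lborel. norm (f \<theta>)^2) \<le> (LINT \<theta>:{-1..0}|lborel. g \<theta>)"
proof -
  have "(\<lambda>\<theta>. indicator {-1..0} \<theta> *\<^sub>R norm (f \<theta>)^2)
      = (\<lambda>\<theta>. norm (indicator {-1..0::real} \<theta> *\<^sub>R f \<theta>)^2)"
    by (auto simp: indicator_def)
  moreover have "(\<lambda>\<theta>. norm (indicator {-1..0::real} \<theta> *\<^sub>R f \<theta>)^2) \<in> borel_measurable lborel"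
    using meas unfolding set_borel_measurable_def by measurable
  ultimately have "set_borel_measurable lborel {-1..0} (\<lambda>\<theta>. norm (f \<theta>)^2)"
    unfolding set_borel_measurable_def by simp
  then have int: "set_integrable lborel {-1..0} (\<lambda>\<theta>. norm (f \<theta>)^2)"
  proof (rule set_integrable_bound[OF g _ AE_I2], intro impI)
    fix \<theta> :: real assume "\<theta> \<in> {-1..0}"
    then show "norm (norm (f \<theta>)^2) \<le> norm (g \<theta>)"
      using bound abs_ge_self[of "g \<theta>"] by fastforce
  qed
  then show ?thesis
    using meas g bound unfolding L2_on_def by (auto intro: set_integral_mono)
qed

lemma M2_norm_le:
  assumes "norm v \<le> a" and "(LINT \<theta>:{-1..0}|lborel. norm (f \<theta>)^2) \<le> b^2" and "0 \<le> b"
  shows "M2_norm v f \<le> a + b"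
proof -
  have "0 \<le> a" using assms(1) norm_ge_zero order_trans by blast
  have "norm v ^ 2 \<le> a ^ 2" using assms(1) by (simp add: power_mono)
  then have "norm v ^ 2 + (LINT \<theta>:{-1..0}|lborel. norm (f \<theta>)^2) \<le> (a + b)^2"
    using assms(2) mult_nonneg_nonneg[OF \<open>0 \<le> a\<close> assms(3)] by (simp add: power2_sum)
  then show ?thesis
    unfolding M2_norm_def using \<open>0 \<le> a\<close> assms(3) by (simp add: real_sqrt_le_iff real_le_lsqrt)
qed

lemma set_integrable_const_unit: "set_integrable lborel {-1..0::real} (\<lambda>_. c::real)"
  by (rule borel_integrable_atLeastAtMost') simp

lemma set_integral_const_unit: "(LINT \<theta>:{-1..0::real}|lborel. c) = (c::real)"
  by (simp add: set_integral_const)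

lemma phi_bound:
  fixes A1 :: "complex^'n^'n" and x :: "complex^'n"
  assumes R: "\<bar>Re l\<bar> \<le> R" and x: "norm x = 1"
  shows "L2_on (phi1 l x) \<and> M2_norm (phi0 A1 l x) (phi1 l x) \<le> 1 + exp R * norm A1 + exp R"
proof -
  have "cmod (exp (- l)) \<le> exp R" using cmod_exp_le[OF R, of "-1"] by simp
  then have "norm (exp (- l) *s (A1 *v x)) \<le> exp R * (norm A1 * norm x)"
    unfolding norm_cvec_scale by (intro mult_mono norm_matrix_vector_le) auto
  moreover have "phi0 A1 l x = x - exp (- l) *s (A1 *v x)"
    by (simp add: phi0_def matrix_vector_mult_diff_rdistrib smat_mult_vector)
  ultimately have phi0: "norm (phi0 A1 l x) \<le> 1 + exp R * norm A1"
    using norm_triangle_ineq4[of x "exp (- l) *s (A1 *v x)"] x by simp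
  have "continuous_on UNIV (phi1 l x)"
    unfolding phi1_def[abs_def] vector_scalar_mult_def by (intro continuous_intros)
  then have meas: "set_borel_measurable lborel {-1..0} (phi1 l x)"
    unfolding set_borel_measurable_def measurable_lborel2
    by (intro borel_measurable_continuous_on_indicator) (auto intro: continuous_on_subset)
  have "norm (phi1 l x \<theta>)^2 \<le> (exp R)^2" if "\<theta> \<in> {-1..0}" for \<theta>
    using cmod_exp_le[OF R, of \<theta>] that x by (simp add: phi1_def norm_cvec_scale power_mono)
  then have "L2_on (phi1 l x) \<and> (LINT \<theta>:{-1..0}|lborel. norm (phi1 l x \<theta>)^2) \<le> (exp R)^2"
    using L2_on_by_bound[OF meas set_integrable_const_unit, of "(exp R)^2"]
    unfolding set_integral_const_unit by blast
  then show ?thesis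
    using M2_norm_le[OF phi0] by simp
qed

section \<open>The adjoint eigenvector psi\<close>

text \<open>Extension by zero outside [-1,0], and the L_1(-1,0) norm.  Members of L_2(-1,0)
  become globally Borel measurable and integrable after cutting off.\<close>

definition cutoff :: "(real \<Rightarrow> 'a::real_vector) \<Rightarrow> real \<Rightarrow> 'a" where
  "cutoff f s = indicator {-1..0::real} s *\<^sub>R f s"

definition L1_norm :: "(real \<Rightarrow> 'a::real_normed_vector) \<Rightarrow> real" where
  "L1_norm f = (LINT s:{-1..0}|lborel. norm (f s))"

lemma cutoff_zero [simp]: "s \<notin> {-1..0} \<Longrightarrow> cutoff f s = 0"
  and cutoff_inside [simp]: "s \<in> {-1..0} \<Longrightarrow> cutoff f s = f s"
  by (simp_all add: cutoff_def)

lemma L2_on_cutoff_measurable [measurable]: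
  "L2_on f \<Longrightarrow> cutoff f \<in> borel_measurable borel"
  unfolding L2_on_def set_borel_measurable_def cutoff_def[abs_def] by simp

text \<open>L_2(-1,0) is contained in L_1(-1,0), since |f| <= 1 + |f|^2.\<close>

lemma L2_on_integrable_norm:
  fixes f :: "real \<Rightarrow> 'a::euclidean_space"
  assumes "L2_on f"
  shows "integrable lborel (\<lambda>s. norm (cutoff f s))"
proof (rule Bochner_Integration.integrable_bound)
  have "set_integrable lborel {-1..0} (\<lambda>s. 1 + norm (f s)^2)"
    using set_integrable_const_unit assms unfolding L2_on_def by (intro set_integral_add) auto
  then show "integrable lborel (\<lambda>s. indicator {-1..0::real} s *\<^sub>R (1 + norm (f s)^2))"
    unfolding set_integrable_def .
  show "(\<lambda>s. norm (cutoff f s)) \<in> borel_measurable lborel"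
    using assms by measurable
  have "t \<le> 1 + t^2" for t :: real
    using zero_le_power2[of "t - 1/2"] by (simp add: power2_eq_square algebra_simps)
  then show "AE s in lborel. norm (norm (cutoff f s)) \<le> norm (indicator {-1..0::real} s *\<^sub>R (1 + norm (f s)^2))"
    by (intro AE_I2) (simp add: cutoff_def indicator_def)
qed

lemma L1_norm_eq_integral: "L1_norm f = integral\<^sup>L lborel (\<lambda>s. norm (cutoff f s))"
  unfolding L1_norm_def set_lebesgue_integral_def cutoff_def by simp

lemma borel_measurable_adjm [measurable (raw)]:
  assumes "f \<in> borel_measurable M"
  shows "(\<lambda>x. adjm (f x :: complex^'n^'m)) \<in> borel_measurable M"
proof -
  have "continuous_on UNIV (adjm :: complex^'n^'m \<Rightarrow> complex^'m^'n)"
    unfolding adjm_def[abs_def] by (intro continuous_intros)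
  from borel_measurable_continuous_on[OF this assms]
  show ?thesis .
qed

lemma borel_measurable_smat [measurable (raw)]:
  assumes "f \<in> borel_measurable M" and "g \<in> borel_measurable M"
  shows "(\<lambda>x. smat (f x) (g x :: complex^'n^'m)) \<in> borel_measurable M"
proof -
  have "continuous_on UNIV (\<lambda>p::complex \<times> (complex^'n^'m). smat (fst p) (snd p))"
    unfolding smat_def by (intro continuous_intros)
  from borel_measurable_continuous_on[OF this borel_measurable_Pair[OF assms]]
  show ?thesis by simp
qed

lemma borel_measurable_matrix_vector_mult [measurable (raw)]:
  assumes "f \<in> borel_measurable M" and "g \<in> borel_measurable M"
  shows "(\<lambda>x. (f x :: complex^'n^'m) *v g x) \<in> borel_measurable M"
proof -
  have "continuous_on UNIV (\<lambda>p::(complex^'n^'m) \<times> (complex^'n). fst p *v snd p)"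
    unfolding matrix_vector_mult_def by (intro continuous_intros)
  from borel_measurable_continuous_on[OF this borel_measurable_Pair[OF assms]]
  show ?thesis by simp
qed

lemma borel_measurable_vector_scalar_mult [measurable (raw)]:
  assumes "f \<in> borel_measurable M" and "g \<in> borel_measurable M"
  shows "(\<lambda>x. f x *s (g x :: complex^'n)) \<in> borel_measurable M"
proof -
  have "continuous_on UNIV (\<lambda>p::complex \<times> (complex^'n). fst p *s snd p)"
    unfolding vector_scalar_mult_def by (intro continuous_intros)
  from borel_measurable_continuous_on[OF this borel_measurable_Pair[OF assms]]
  show ?thesis by simp
qed

definition psi_kernel :: "(real \<Rightarrow> complex^'n^'n) \<Rightarrow> (real \<Rightarrow> complex^'n^'n) \<Rightarrow> complex
                          \<Rightarrow> real \<Rightarrow> complex^'n^'n" where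
  "psi_kernel A2 A3 l s = smat (exp (cnj l * of_real s)) (adjm (A3 s) + smat (cnj l) (adjm (A2 s)))"

definition tail_integral :: "(real \<Rightarrow> 'a::{banach, second_countable_topology}) \<Rightarrow> real \<Rightarrow> 'a" where
  "tail_integral G \<theta> = (LINT s|lborel. (if \<theta> < s \<and> s < 0 then G s else 0))"

lemma interval_integral_from_0:
  fixes G :: "real \<Rightarrow> 'a::{banach, second_countable_topology}"
  assumes "\<theta> \<le> 0"
  shows "interval_lebesgue_integral lborel (ereal 0) (ereal \<theta>) G = - tail_integral G \<theta>"
proof (cases "\<theta> = 0")
  case True
  have "(\<lambda>s::real. if 0 < s \<and> s < 0 then G s else 0) = (\<lambda>s. 0)" by (intro ext) (simp, linarith)
  with True show ?thesis
    by (simp add: tail_integral_def interval_lebesgue_integral_def einterval_same set_lebesgue_integral_def)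
next
  case False
  then show ?thesis
    using assms unfolding interval_lebesgue_integral_def set_lebesgue_integral_def tail_integral_def
    by (auto intro!: Bochner_Integration.integral_cong arg_cong[where f=uminus]
             simp: einterval_iff indicator_def)
qed

lemma tail_integral_cong:
  assumes "\<theta> \<in> {-1..0}" and "\<And>s. s \<in> {-1..0} \<Longrightarrow> G s = H s"
  shows "tail_integral G \<theta> = tail_integral H \<theta>"
  unfolding tail_integral_def using assms by (intro Bochner_Integration.integral_cong) auto

lemma norm_tail_integral_le:
  assumes [measurable]: "G \<in> borel_measurable borel"
    and "integrable lborel h" and "\<And>s. norm (G s) \<le> h s"
  shows "norm (tail_integral G \<theta>) \<le> integral\<^sup>L lborel h"
proof -
  have h0: "0 \<le> h s" for s using assms(3) norm_ge_zero order_trans by blast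
  have "integrable lborel (\<lambda>s. if \<theta> < s \<and> s < 0 then G s else 0)"
    by (rule Bochner_Integration.integrable_bound[OF assms(2)]) (auto simp: assms(3) h0)
  then show ?thesis unfolding tail_integral_def
    by (rule Bochner_Integration.integral_norm_bound_integral[OF _ assms(2)]) (auto simp: assms(3) h0)
qed

text \<open>On [-1,0], psi splits into three explicit terms; the kernel may be replaced by its
  cut-off version, which is globally measurable and integrable.\<close>

lemma psi1_eq:
  assumes "\<theta> \<in> {-1..0}"
  shows "psi1 A2 A3 l y \<theta> =
    (cnj l * exp (- cnj l * of_real \<theta>)) *s y - adjm (A2 \<theta>) *v y
    - exp (- cnj l * of_real \<theta>) *s (tail_integral (psi_kernel (cutoff A2) (cutoff A3) l) \<theta> *v y)"
proof -
  let ?T = "tail_integral (psi_kernel (cutoff A2) (cutoff A3) l) \<theta>"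
  have "interval_lebesgue_integral lborel (ereal 0) (ereal \<theta>) (psi_kernel A2 A3 l)
      = - tail_integral (psi_kernel A2 A3 l) \<theta>"
    using assms by (simp add: interval_integral_from_0)
  also have "tail_integral (psi_kernel A2 A3 l) \<theta> = ?T"
    by (rule tail_integral_cong[OF assms]) (simp add: psi_kernel_def)
  finally have J: "interval_lebesgue_integral lborel (ereal 0) (ereal \<theta>)
      (\<lambda>s. smat (exp (cnj l * of_real s)) (adjm (A3 s) + smat (cnj l) (adjm (A2 s)))) = - ?T"
    unfolding psi_kernel_def .
  have neg: "(- ?T) *v y = - (?T *v y)"
    by (metis diff_0 matrix_vector_mult_0 matrix_vector_mult_diff_rdistrib)
  show ?thesis
    unfolding psi1_def J
    by (simp add: matrix_vector_mult_add_rdistrib matrix_vector_mult_diff_rdistrib smat_mult_vector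
        neg vector_smult_rneg)
qed

lemma norm_psi_kernel_cutoff_le:
  assumes R: "\<bar>Re l\<bar> \<le> R"
  shows "norm (psi_kernel (cutoff A2) (cutoff A3) l s)
           \<le> exp R * (norm (cutoff A3 s) + cmod l * norm (cutoff A2 s))"
proof (cases "s \<in> {-1..0}")
  case True
  have "norm (adjm (A3 s) + smat (cnj l) (adjm (A2 s))) \<le> norm (A3 s) + cmod l * norm (A2 s)"
    using norm_triangle_ineq[of "adjm (A3 s)" "smat (cnj l) (adjm (A2 s))"]
    by (simp add: norm_smat norm_adjm)
  moreover have "cmod (exp (cnj l * of_real s)) \<le> exp R"
    using cmod_exp_le[of "cnj l" R s] R True by simp
  ultimately show ?thesis
    using True unfolding psi_kernel_def norm_smat by (simp add: mult_mono)
next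
  case False
  then show ?thesis by (simp add: psi_kernel_def smat_def adjm_def vec_eq_iff)
qed

lemma norm_tail_psi_kernel_le:
  assumes A2: "L2_on A2" and A3: "L2_on A3" and R: "\<bar>Re l\<bar> \<le> R"
  shows "norm (tail_integral (psi_kernel (cutoff A2) (cutoff A3) l) \<theta>)
           \<le> exp R * (L1_norm A3 + cmod l * L1_norm A2)"
proof -
  have int: "integrable lborel (\<lambda>s. norm (cutoff A3 s))" "integrable lborel (\<lambda>s. norm (cutoff A2 s))"
    using L2_on_integrable_norm A2 A3 by auto
  have "psi_kernel (cutoff A2) (cutoff A3) l \<in> borel_measurable borel"
    using A2 A3 unfolding psi_kernel_def[abs_def] by measurable
  then have "norm (tail_integral (psi_kernel (cutoff A2) (cutoff A3) l) \<theta>)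
      \<le> (LINT s|lborel. exp R * (norm (cutoff A3 s) + cmod l * norm (cutoff A2 s)))"
    using int by (intro norm_tail_integral_le norm_psi_kernel_cutoff_le[OF R]) auto
  also have "\<dots> = exp R * (L1_norm A3 + cmod l * L1_norm A2)"
    using int by (simp add: L1_norm_eq_integral)
  finally show ?thesis .
qed

text \<open>psi is measurable on [-1,0], being equal there to a globally measurable function.\<close>

lemma psi1_measurable:
  assumes A2: "L2_on A2" and A3: "L2_on A3"
  shows "set_borel_measurable lborel {-1..0} (psi1 A2 A3 l y)"
proof -
  define Psi where "Psi \<theta> = (cnj l * exp (- cnj l * of_real \<theta>)) *s y - adjm (cutoff A2 \<theta>) *v y
    - exp (- cnj l * of_real \<theta>) *s (tail_integral (psi_kernel (cutoff A2) (cutoff A3) l) \<theta> *v y)"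
    for \<theta>
  have [measurable]: "Psi \<in> borel_measurable borel"
    using A2 A3 unfolding Psi_def[abs_def] tail_integral_def psi_kernel_def[abs_def] by measurable
  have "(\<lambda>\<theta>. indicator {-1..0} \<theta> *\<^sub>R psi1 A2 A3 l y \<theta>)
      = (\<lambda>\<theta>. indicator {-1..0::real} \<theta> *\<^sub>R Psi \<theta>)"
  proof
    fix \<theta> :: real
    show "indicator {-1..0} \<theta> *\<^sub>R psi1 A2 A3 l y \<theta> = indicator {-1..0} \<theta> *\<^sub>R Psi \<theta>"
      by (cases "\<theta> \<in> {-1..0}") (simp_all add: psi1_eq Psi_def)
  qed
  then show ?thesis
    unfolding set_borel_measurable_def by simp
qed

lemma norm_psi1_le:
  assumes A2: "L2_on A2" and A3: "L2_on A3" and R: "\<bar>Re l\<bar> \<le> R"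
    and y: "norm y = 1" and \<theta>: "\<theta> \<in> {-1..0}"
  shows "norm (psi1 A2 A3 l y \<theta>)
    \<le> cmod l * exp R + norm (A2 \<theta>) + exp R * (exp R * (L1_norm A3 + cmod l * L1_norm A2))"
proof -
  let ?e = "exp (- cnj l * of_real \<theta>)"
  let ?T = "tail_integral (psi_kernel (cutoff A2) (cutoff A3) l) \<theta>"
  let ?a = "(cnj l * ?e) *s y" and ?b = "adjm (A2 \<theta>) *v y" and ?c = "?e *s (?T *v y)"
  have e: "cmod ?e \<le> exp R" using cmod_exp_le[of "- cnj l" R \<theta>] R \<theta> by simp
  have "norm ?a \<le> cmod l * exp R"
    using e y by (simp add: norm_cvec_scale norm_mult mult_left_mono)
  moreover have "norm ?b \<le> norm (A2 \<theta>)"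
    using norm_matrix_vector_le[of "adjm (A2 \<theta>)" y] y by (simp add: norm_adjm)
  moreover have "norm ?c \<le> exp R * (exp R * (L1_norm A3 + cmod l * L1_norm A2))"
    unfolding norm_cvec_scale
    using e norm_matrix_vector_le[of ?T y] y norm_tail_psi_kernel_le[OF A2 A3 R, of \<theta>]
    by (intro mult_mono) auto
  ultimately show ?thesis
    unfolding psi1_eq[OF \<theta>]
    using norm_triangle_ineq4[of "?a - ?b" ?c] norm_triangle_ineq4[of ?a ?b] by linarith
qed

lemma L1_norm_nonneg: "0 \<le> L1_norm f"
  unfolding L1_norm_eq_integral by simp

lemma psi_bound:
  assumes A2: "L2_on A2" and A3: "L2_on A3" and R: "\<bar>Re l\<bar> \<le> R" and y: "norm y = 1"
  shows "L2_on (psi1 A2 A3 l y) \<and>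
    M2_norm y (psi1 A2 A3 l y)
      \<le> (1 + sqrt (2 * (LINT \<theta>:{-1..0}|lborel. norm (A2 \<theta>)^2)) + 2 * exp R * exp R * L1_norm A3)
         + 2 * exp R * (1 + exp R * L1_norm A2) * cmod l"
proof -
  define c where "c = cmod l * exp R + exp R * (exp R * (L1_norm A3 + cmod l * L1_norm A2))"
  define I where "I = (LINT \<theta>:{-1..0}|lborel. norm (A2 \<theta>)^2)"
  have c0: "0 \<le> c" unfolding c_def using L1_norm_nonneg[of A2] L1_norm_nonneg[of A3] by simp
  have I0: "0 \<le> I" unfolding I_def set_lebesgue_integral_def by simp
  have bound: "norm (psi1 A2 A3 l y \<theta>)^2 \<le> 2 * c^2 + 2 * norm (A2 \<theta>)^2" if "\<theta> \<in> {-1..0}" for \<theta>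
  proof -
    have "norm (psi1 A2 A3 l y \<theta>)^2 \<le> (c + norm (A2 \<theta>))^2"
      using norm_psi1_le[OF A2 A3 R y that] unfolding c_def by (simp add: power_mono)
    also have "\<dots> \<le> 2 * c^2 + 2 * norm (A2 \<theta>)^2"
      using zero_le_power2[of "c - norm (A2 \<theta>)"] by (simp add: power2_eq_square algebra_simps)
    finally show ?thesis .
  qed
  have "set_integrable lborel {-1..0} (\<lambda>\<theta>. 2 * c^2 + 2 * norm (A2 \<theta>)^2)"
    using A2 set_integrable_const_unit unfolding L2_on_def
    by (intro set_integral_add set_integrable_mult_right) auto
  from L2_on_by_bound[OF psi1_measurable[OF A2 A3] this bound]
  have L2: "L2_on (psi1 A2 A3 l y)"
    and int_le: "(LINT \<theta>:{-1..0}|lborel. norm (psi1 A2 A3 l y \<theta>)^2)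
                \<le> (LINT \<theta>:{-1..0}|lborel. 2 * c^2 + 2 * norm (A2 \<theta>)^2)"
    by auto
  note int_le
  also have "\<dots> = 2 * c^2 + 2 * I"
    using A2 set_integrable_const_unit unfolding L2_on_def I_def
    by (simp add: set_integral_add set_integral_mult_right set_integral_const_unit)
  also have "\<dots> \<le> (2 * c + sqrt (2 * I))^2"
    using c0 I0 by (simp add: power2_sum)
  finally have "M2_norm y (psi1 A2 A3 l y) \<le> 1 + (2 * c + sqrt (2 * I))"
    using y c0 I0 by (intro M2_norm_le) auto
  then show ?thesis
    using L2 unfolding c_def I_def by (simp add: algebra_simps)
qed

section \<open>Location of the eigenvalues\<close>

lemma bounded_if_square_summable:
  fixes r :: "int \<Rightarrow> real"
  assumes "summable (\<lambda>j::nat. (r (int j))\<^sup>2 + (r (- int j))\<^sup>2)"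
  shows "\<exists>R\<ge>0. \<forall>k. \<bar>r k\<bar> \<le> R"
proof -
  have "Bseq (\<lambda>j::nat. (r (int j))\<^sup>2 + (r (- int j))\<^sup>2)"
    using summable_LIMSEQ_zero[OF assms] by (intro convergent_imp_Bseq convergentI)
  then obtain B where B: "\<And>j. (r (int j))\<^sup>2 + (r (- int j))\<^sup>2 \<le> B"
    by (auto simp: Bseq_def)
  have "(r k)\<^sup>2 \<le> B" for k
  proof (cases "k \<ge> 0")
    case True
    then obtain j where "k = int j" using nonneg_int_cases by metis
    then have "(r k)\<^sup>2 = (r (int j))\<^sup>2" by simp
    then show ?thesis using B[of j] zero_le_power2[of "r (- int j)"] by linarith
  next
    case False
    then obtain j where "k = - int j" by (metis neg_int_cases less_le not_le)
    then have "(r k)\<^sup>2 = (r (- int j))\<^sup>2" by simp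
    then show ?thesis using B[of j] zero_le_power2[of "r (int j)"] by linarith
  qed
  then have "\<bar>r k\<bar> \<le> sqrt B" for k
    using real_sqrt_le_mono[of "(r k)\<^sup>2" B] by simp
  moreover have "0 \<le> sqrt B" using calculation[of 0] abs_ge_zero order_trans by blast
  ultimately show ?thesis by blast
qed

lemma Re_lam_tilde [simp]: "Re (lam_tilde \<mu> k) = 0"
  by (simp add: lam_tilde_def)

lemma cmod_lam_tilde_ge: "2 * pi * \<bar>real_of_int k\<bar> - pi \<le> cmod (lam_tilde \<mu> k)"
proof -
  have "cmod (lam_tilde \<mu> k) = \<bar>Arg \<mu> + 2 * pi * of_int k\<bar>"
    unfolding lam_tilde_def norm_mult norm_of_real by simp
  moreover have "\<bar>Arg \<mu>\<bar> \<le> pi" using Arg_bounded[of \<mu>] by auto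
  moreover have "\<bar>2 * pi * real_of_int k\<bar> = 2 * pi * \<bar>real_of_int k\<bar>" by (simp add: abs_mult)
  ultimately show ?thesis by linarith
qed

lemma near_lam_tilde_Re_le:
  assumes "cmod (z - lam_tilde \<mu> k) \<le> R"
  shows "\<bar>Re z\<bar> \<le> R"
  using abs_Re_le_cmod[of "z - lam_tilde \<mu> k"] assms by simp

lemma near_lam_tilde_ge_1:
  assumes "cmod (z - lam_tilde \<mu> k) \<le> R" and "0 \<le> R" and "R + 1 \<le> \<bar>real_of_int k\<bar>"
  shows "1 \<le> cmod z"
proof -
  have "2 * pi * R + 2 * pi \<le> 2 * pi * \<bar>real_of_int k\<bar>"
    using mult_left_mono[OF assms(3), of "2 * pi"] by (simp add: algebra_simps)
  moreover have "R \<le> 2 * pi * R"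
    using mult_right_mono[of 1 "2 * pi" R] pi_gt3 assms(2) by simp
  moreover have "cmod (lam_tilde \<mu> k) \<le> cmod z + R"
    using norm_triangle_ineq2[of "lam_tilde \<mu> k" z] assms(1) by (simp add: norm_minus_commute)
  ultimately show ?thesis
    using cmod_lam_tilde_ge[of k \<mu>] pi_gt3 by linarith
qed

lemma uniform_lower_bound:
  fixes f :: "'a \<Rightarrow> int \<Rightarrow> complex"
  assumes "finite S" and nz: "\<forall>\<mu>\<in>S. \<forall>k. int N \<le> \<bar>k\<bar> \<longrightarrow> f \<mu> k \<noteq> 0"
    and large: "\<forall>\<mu>\<in>S. \<forall>k. K \<le> \<bar>k\<bar> \<longrightarrow> 1 \<le> cmod (f \<mu> k)"
  shows "\<exists>\<delta>>0. \<forall>\<mu>\<in>S. \<forall>k. int N \<le> \<bar>k\<bar> \<longrightarrow> \<delta> \<le> cmod (f \<mu> k)"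
proof -
  define F where "F = (\<lambda>(\<mu>, k). cmod (f \<mu> k)) ` (S \<times> {k. int N \<le> \<bar>k\<bar> \<and> \<bar>k\<bar> \<le> K})"
  have "finite {k. int N \<le> \<bar>k\<bar> \<and> \<bar>k\<bar> \<le> K}"
    by (rule finite_subset[of _ "{-K..K}"]) auto
  then have fin: "finite (insert 1 F)" unfolding F_def using assms(1) by simp
  have pos: "\<forall>z\<in>insert 1 F. 0 < z" unfolding F_def using nz by auto
  show ?thesis
  proof (intro exI[of _ "Min (insert 1 F)"] conjI ballI allI impI)
    show "0 < Min (insert 1 F)" using fin pos by simp
    fix \<mu> k assume "\<mu> \<in> S" and "int N \<le> \<bar>k\<bar>"
    show "Min (insert 1 F) \<le> cmod (f \<mu> k)"
    proof (cases "\<bar>k\<bar> \<le> K")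
      case True
      then have "cmod (f \<mu> k) \<in> insert 1 F"
        unfolding F_def using \<open>\<mu> \<in> S\<close> \<open>int N \<le> \<bar>k\<bar>\<close> by force
      then show ?thesis using fin by simp
    next
      case False
      then show ?thesis using large \<open>\<mu> \<in> S\<close> fin by (meson Min_le insertI1 le_cases order_trans)
    qed
  qed
qed

lemma eigenvalue_location:
  fixes lam :: "complex \<Rightarrow> int \<Rightarrow> complex" and r :: "int \<Rightarrow> real"
  assumes "finite S"
    and r_sq: "summable (\<lambda>j::nat. (r (int j))\<^sup>2 + (r (- int j))\<^sup>2)"
    and close: "\<forall>\<mu>\<in>S. \<forall>k. int N \<le> \<bar>k\<bar> \<longrightarrow> cmod (lam \<mu> k - lam_tilde \<mu> k) < r k"
    and nonzero: "\<forall>\<mu>\<in>S. \<forall>k. int N \<le> \<bar>k\<bar> \<longrightarrow> lam \<mu> k \<noteq> 0"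
  shows "\<exists>\<rho> \<delta>. 0 < \<delta> \<and>
           (\<forall>\<mu>\<in>S. \<forall>k. int N \<le> \<bar>k\<bar> \<longrightarrow> \<bar>Re (lam \<mu> k)\<bar> \<le> \<rho> \<and> \<delta> \<le> cmod (lam \<mu> k))"
proof -
  obtain \<rho> where \<rho>0: "0 \<le> \<rho>" and \<rho>: "\<And>k. \<bar>r k\<bar> \<le> \<rho>"
    using bounded_if_square_summable[OF r_sq] by blast
  have near: "cmod (lam \<mu> k - lam_tilde \<mu> k) \<le> \<rho>" if "\<mu> \<in> S" "int N \<le> \<bar>k\<bar>" for \<mu> k
    using close that \<rho>[of k] by force
  have "\<forall>\<mu>\<in>S. \<forall>k. max (int N) (\<lceil>\<rho>\<rceil> + 1) \<le> \<bar>k\<bar> \<longrightarrow> 1 \<le> cmod (lam \<mu> k)"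
    using near \<rho>0 by (auto intro!: near_lam_tilde_ge_1[of _ _ _ \<rho>]) linarith
  then obtain \<delta> where "0 < \<delta>" and "\<forall>\<mu>\<in>S. \<forall>k. int N \<le> \<bar>k\<bar> \<longrightarrow> \<delta> \<le> cmod (lam \<mu> k)"
    using uniform_lower_bound[OF \<open>finite S\<close> nonzero] by blast
  then show ?thesis using near near_lam_tilde_Re_le by blast
qed

lemma divide_affine_le:
  fixes a t P Q \<delta> :: real
  assumes "a \<le> P + Q * t" and "0 < \<delta>" and "\<delta> \<le> t" and "0 \<le> P"
  shows "a / t \<le> P / \<delta> + Q"
proof -
  have "a / t \<le> (P + Q * t) / t" using assms by (simp add: divide_right_mono)
  also have "\<dots> = P / t + Q" using assms by (simp add: add_divide_distrib)
  also have "P / t \<le> P / \<delta>" using assms by (simp add: frac_le)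
  finally show ?thesis by simp
qed

theorem lemma4:
  fixes A1 :: "complex^'n^'n"
    and A2 A3 :: "real \<Rightarrow> complex^'n^'n"
    and lam :: "complex \<Rightarrow> int \<Rightarrow> complex"
    and r :: "int \<Rightarrow> real"
    and N1 N :: nat
    and x y :: "complex \<Rightarrow> int \<Rightarrow> complex^'n"
  assumes A2_L2: "L2_on A2" and A3_L2: "L2_on A3"
    and simple: "\<forall>\<mu>\<in>sigma1 A1. alg_mult A1 \<mu> = 1"
    and r_sq: "summable (\<lambda>j::nat. (r (int j))\<^sup>2 + (r (- int j))\<^sup>2)"
    and root: "\<forall>\<mu>\<in>sigma1 A1. \<forall>k. \<bar>k\<bar> \<ge> int N1 \<longrightarrow>
                 det (Delta A1 A2 A3 (lam \<mu> k)) = 0 \<and> cmod (lam \<mu> k - lam_tilde \<mu> k) < r k"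
    and root_unique: "\<forall>\<mu>\<in>sigma1 A1. \<forall>k z. \<bar>k\<bar> \<ge> int N1 \<longrightarrow>
                 det (Delta A1 A2 A3 z) = 0 \<longrightarrow> cmod (z - lam_tilde \<mu> k) < r k \<longrightarrow> z = lam \<mu> k"
    and root_conv: "\<forall>\<mu>\<in>sigma1 A1.
                 ((\<lambda>j::nat. lam \<mu> (int j) - lam_tilde \<mu> (int j)) \<longlonglongrightarrow> 0) \<and>
                 ((\<lambda>j::nat. lam \<mu> (- int j) - lam_tilde \<mu> (- int j)) \<longlonglongrightarrow> 0)"
    and NN1: "N \<ge> N1"
    and nonzero: "\<forall>\<mu>\<in>sigma1 A1. \<forall>k. \<bar>k\<bar> \<ge> int N \<longrightarrow> lam \<mu> k \<noteq> 0"
    and x_ker: "\<forall>\<mu>\<in>sigma1 A1. \<forall>k. \<bar>k\<bar> \<ge> int N \<longrightarrow>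
                 Delta A1 A2 A3 (lam \<mu> k) *v x \<mu> k = 0 \<and> norm (x \<mu> k) = 1"
    and y_ker: "\<forall>\<mu>\<in>sigma1 A1. \<forall>k. \<bar>k\<bar> \<ge> int N \<longrightarrow>
                 Delta_star A1 A2 A3 (cnj (lam \<mu> k)) *v y \<mu> k = 0 \<and> norm (y \<mu> k) = 1"
  shows "\<exists>C>0. \<forall>\<mu>\<in>sigma1 A1. \<forall>k. \<bar>k\<bar> \<ge> int N \<longrightarrow>
           L2_on (phi1 (lam \<mu> k) (x \<mu> k)) \<and>
           L2_on (psi1 A2 A3 (lam \<mu> k) (y \<mu> k)) \<and>
           M2_norm (phi0 A1 (lam \<mu> k) (x \<mu> k)) (phi1 (lam \<mu> k) (x \<mu> k)) \<le> C \<and>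
           M2_norm (y \<mu> k) (psi1 A2 A3 (lam \<mu> k) (y \<mu> k)) / cmod (lam \<mu> k) \<le> C"
proof -
  have "finite (sigma1 A1)"
    using finite_eigenvalues[of A1] by (rule finite_subset[rotated]) (auto simp: sigma1_def)
  moreover have "\<forall>\<mu>\<in>sigma1 A1. \<forall>k. int N \<le> \<bar>k\<bar> \<longrightarrow> cmod (lam \<mu> k - lam_tilde \<mu> k) < r k"
    using root NN1 by auto
  ultimately obtain \<rho> \<delta> where \<delta>0: "0 < \<delta>" and loc: "\<forall>\<mu>\<in>sigma1 A1. \<forall>k. int N \<le> \<bar>k\<bar> \<longrightarrow>
      \<bar>Re (lam \<mu> k)\<bar> \<le> \<rho> \<and> \<delta> \<le> cmod (lam \<mu> k)"
    using eigenvalue_location[OF _ r_sq _ nonzero] by blast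
  define P where "P = 1 + sqrt (2 * (LINT \<theta>:{-1..0}|lborel. norm (A2 \<theta>)^2))
                      + 2 * exp \<rho> * exp \<rho> * L1_norm A3"
  define Q where "Q = 2 * exp \<rho> * (1 + exp \<rho> * L1_norm A2)"
  have "0 \<le> (LINT \<theta>:{-1..0}|lborel. norm (A2 \<theta>)^2)"
    unfolding set_lebesgue_integral_def by simp
  then have P0: "0 \<le> P" unfolding P_def using L1_norm_nonneg[of A3] by simp
  show ?thesis
  proof (intro exI[of _ "max (1 + exp \<rho> * norm A1 + exp \<rho>) (P / \<delta> + Q)"] conjI allI impI ballI)
    fix \<mu> k assume \<mu>: "\<mu> \<in> sigma1 A1" and k: "int N \<le> \<bar>k\<bar>"
    have Re: "\<bar>Re (lam \<mu> k)\<bar> \<le> \<rho>" and \<delta>: "\<delta> \<le> cmod (lam \<mu> k)" using loc \<mu> k by auto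
    have x: "norm (x \<mu> k) = 1" and y: "norm (y \<mu> k) = 1" using x_ker y_ker \<mu> k by auto
    note phi = phi_bound[OF Re x, of A1] and psi = psi_bound[OF A2_L2 A3_L2 Re y]
    show "L2_on (phi1 (lam \<mu> k) (x \<mu> k))" and "L2_on (psi1 A2 A3 (lam \<mu> k) (y \<mu> k))"
      using phi psi by blast+
    show "M2_norm (phi0 A1 (lam \<mu> k) (x \<mu> k)) (phi1 (lam \<mu> k) (x \<mu> k))
            \<le> max (1 + exp \<rho> * norm A1 + exp \<rho>) (P / \<delta> + Q)"
      using phi by linarith
    have "M2_norm (y \<mu> k) (psi1 A2 A3 (lam \<mu> k) (y \<mu> k)) / cmod (lam \<mu> k) \<le> P / \<delta> + Q"
      using psi \<delta>0 \<delta> P0 unfolding P_def[symmetric] Q_def[symmetric] by (intro divide_affine_le) auto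
    then show "M2_norm (y \<mu> k) (psi1 A2 A3 (lam \<mu> k) (y \<mu> k)) / cmod (lam \<mu> k)
            \<le> max (1 + exp \<rho> * norm A1 + exp \<rho>) (P / \<delta> + Q)"
      by linarith
  qed (intro max.strict_coboundedI1 add_pos_pos add_pos_nonneg; simp)
qed

end
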